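(* In the tracking setting, fix $k\geq0$. If $$\|s_{k+1}-s_k\|_2<\min\Big\{r_A,\ r_B,\ \frac{q_B\rho}{\lambda_A\lambda_F}\Big\}\quad\text{and}\quad \|\bar w_k-w^\ast_k\|_2<q_B\rho,$$ then $$\|w^\infty_k-w^\ast_{k+1}\|_2\leq\frac{\lambda_B\lambda_H}{\rho}\Big(\|\bar w_k-w^\ast_k\|_2+\lambda_A\lambda_F\|s_{k+1}-s_k\|_2\Big).$$
   Context: Problem data: $z=(z_1,\dots,z_P)\in\mathbb{R}^{n_z}$; $\mathcal{Z}=\mathcal{Z}_1\times\cdots\times\mathcal{Z}_P$ a product of nonempty bounded boxes; $J(z)=\sum_iJ_i(z_i)$ with polynomials $J_i$; polynomial maps $Q_c:\mathbb{R}^{n_z}\to\mathbb{R}^m$, $g_i:\mathbb{R}^{n_i}\to\mathbb{R}^{q_i}$; $T_i\in\mathbb{R}^{q_i\times p}$; $q=\sum q_i$; $\mathcal{S}\subseteq\mathbb{R}^p$; $G(z,s)=(Q_c(z),g_1(z_1)+T_1s,\dots,g_P(z_P)+T_Ps)$; $L_\rho(z,\mu,s)=J(z)+(\mu+\frac\rho2G(z,s))^\top G(z,s)$; for $w=(z,\mu)$, $F(w,s)=(\nabla J(z)+\nabla_zG(z,s)^\top\mu,\ G(z,s))$; $\mathcal{N}:=\mathcal{N}_{\mathcal{Z}\times\mathbb{R}^{m+q}}$. A KKT point of $(P_s)$: $\min J(z)$ s.t. $G(z,s)=0$, $z\in\mathcal{Z}$, is $w$ with $0\in F(w,s)+\mathcal{N}(w)$.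 For a reference multiplier $\tilde\mu$: $H^{\tilde\mu}_\rho(w,d,s):=(\nabla J(z)+\nabla_zG(z,s)^\top\mu,\ G(z,s)+d+(\tilde\mu-\mu)/\rho)$. Constants: $\lambda_F:=P\max_i\|T_i\|_2$ (so $\|F(w,s)-F(w,s')\|\le\lambda_F\|s-s'\|$); $\lambda_H>0$ with $\|H^{\tilde\mu}_\rho(w,d,s)-H^{\tilde\mu}_\rho(w,d',s')\|\le\lambda_H\|(d,s)-(d',s')\|$ for all arguments; $\lambda_G>0$ a Lipschitz constant of $z\mapsto G(z,s)$ on $\mathcal{Z}$ (independent of $s$). Primal sweep on $L_\rho(\cdot,\mu,s)$: block-coordinate projected-gradient pass over $i=1,\dots,P$ in order, each block update $z_i\leftarrow\pi_{\mathcal{Z}_i}(z_i-\frac1{c_i}\nabla_{z_i}L_\rho)$ (gradient evaluated with already updated preceding blocks) with curvature $c_i$ obtained by backtracking (multiply by $\beta>1$ from an initial $c_i^0>0$) until $f(u)+\frac{\alpha_i}2\|u-z_i\|^2\le f(z_i)+\nabla f(z_i)^\top(u-z_i)+\frac{c_i}2\|u-z_i\|^2$ for the block function $f$, with $\alpha_i>0$. Tracking setting: fix $\rho>0$, $M\ge1$. Given parameters $(s_k)_{k\ge0}\subset\mathcal{S}$ and KKT points $w^\ast_k=(z^\ast_k,\mu^\ast_k)$ of $(P_{s_k})$. Iterates $\bar w_k=(\bar z_k,\bar\mu_k)$ with $\bar z_k\in\mathcal{Z}$ are produced by: $\bar z_{k+1}$ = result of $M$ successive primal sweeps on $L_\rho(\cdot,\bar\mu_k,s_{k+1})$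 started at $\bar z_k$; $\bar\mu_{k+1}=\bar\mu_k+\rho G(\bar z_{k+1},s_{k+1})$. Let $z^\infty_k$ be the limit of infinitely many sweeps on $L_\rho(\cdot,\bar\mu_k,s_{k+1})$ started at $\bar z_k$, and $w^\infty_k:=(z^\infty_k,\ \bar\mu_k+\rho G(z^\infty_k,s_{k+1}))$; $d_k:=(\bar\mu_k-\mu^\ast_k)/\rho$. Standing hypotheses, for every $k$: (A) there are constants $r_A,\delta_A,\lambda_A>0$ (independent of $k$) such that for every $s\in\mathcal{B}(s_k,r_A)\cap\mathcal{S}$ there is a unique $w^\ast(s)\in\mathcal{B}(w^\ast_k,\delta_A)$ with $0\in F(w^\ast(s),s)+\mathcal{N}(w^\ast(s))$, for all $s,s'\in\mathcal{B}(s_k,r_A)\cap\mathcal{S}$ one has $\|w^\ast(s)-w^\ast(s')\|\le\lambda_A\|F(w^\ast(s'),s)-F(w^\ast(s'),s')\|$, and $w^\ast_{k+1}=w^\ast(s_{k+1})$ whenever $\|s_{k+1}-s_k\|<r_A$; (B) there are constants $r_B,q_B,\lambda_B>0$ and $\delta_B\ge\delta_A$ (independent of $k$) such that for all $d\in\mathcal{B}(0,q_B)$, $s\in\mathcal{B}(s_k,r_B)\cap\mathcal{S}$ there is a unique $w^\ast_k(d,s)\in\mathcal{B}(w^\ast_k,\delta_B)$ with $0\in H^{\mu^\ast_k}_\rho(w^\ast_k(d,s),d,s)+\mathcal{N}(w^\ast_k(d,s))$, and $\|w^\ast_k(d,s)-w^\ast_k(d',s')\|\le\lambda_B\|H^{\mu^\ast_k}_\rho(w^\ast_k(d',s'),d,s)-H^{\mu^\ast_k}_\rho(w^\ast_k(d',s'),d',s')\|$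 for all such $d,d',s,s'$; (C) there are constants $C>0$, $\delta>0$, $\psi>0$ (independent of $k$) such that the sequence of sweeps defining $z^\infty_k$ converges, $w^\infty_k=w^\ast_k(d_k,s_{k+1})$ whenever $d_k\in\mathcal{B}(0,q_B)$ and $\|s_{k+1}-s_k\|<r_B$, and if $\|\bar z_k-z^\infty_k\|<\delta$ then $\|\bar z_{k+1}-z^\infty_k\|\le CM^{-\psi}\|\bar z_k-z^\infty_k\|$. (In the paper, $\psi=\psi(d_L,n_z)=1/(d_L(3d_L-3)^{n_z-1}-2)$ with $d_L$ the degree of the augmented Lagrangian.) *)

theory Defs
  imports "HOL-Analysis.Analysis"
begin

inductive polyfun_on :: "'n set \<Rightarrow> (real^'n \<Rightarrow> real) \<Rightarrow> bool" for V where
  pconst: "polyfun_on V (\<lambda>x. c)"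
| pvar: "j \<in> V \<Longrightarrow> polyfun_on V (\<lambda>x. x $ j)"
| padd: "polyfun_on V f \<Longrightarrow> polyfun_on V g \<Longrightarrow> polyfun_on V (\<lambda>x. f x + g x)"
| pmult: "polyfun_on V f \<Longrightarrow> polyfun_on V g \<Longrightarrow> polyfun_on V (\<lambda>x. f x * g x)"

definition grad :: "('a::real_inner \<Rightarrow> real) \<Rightarrow> 'a \<Rightarrow> 'a" where
  "grad f x = (THE g. GDERIV f x :> g)"

definition boxset :: "real^'n \<Rightarrow> real^'n \<Rightarrow> (real^'n) set" where
  "boxset lo up = {z. \<forall>j. lo $ j \<le> z $ j \<and> z $ j \<le> up $ j}"

definition normal_cone :: "'a::real_inner set \<Rightarrow> 'a \<Rightarrow> 'a set" where
  "normal_cone C x = (if x \<in> C then {v. \<forall>y\<in>C. inner v (y - x) \<le> 0} else {})"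

definition gen_eq :: "'a::real_inner set \<Rightarrow> 'a \<Rightarrow> 'a \<Rightarrow> bool" where
  "gen_eq C Phi w \<longleftrightarrow> (0::'a) \<in> {Phi + v | v. v \<in> normal_cone C w}"

definition augL :: "(real^'n \<Rightarrow> real) \<Rightarrow> (real^'n \<Rightarrow> real^'p \<Rightarrow> real^'c) \<Rightarrow> real
    \<Rightarrow> real^'n \<Rightarrow> real^'c \<Rightarrow> real^'p \<Rightarrow> real" where
  "augL J G rho z mu s = J z + inner (mu + (rho / 2) *\<^sub>R G z s) (G z s)"

definition Fmap :: "(real^'n \<Rightarrow> real) \<Rightarrow> (real^'n \<Rightarrow> real^'p \<Rightarrow> real^'c)
    \<Rightarrow> ((real^'n) \<times> (real^'c)) \<Rightarrow> real^'p \<Rightarrow> ((real^'n) \<times> (real^'c))" where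
  "Fmap J G w s = (grad J (fst w) + grad (\<lambda>z. inner (snd w) (G z s)) (fst w), G (fst w) s)"

definition Hmap :: "(real^'n \<Rightarrow> real) \<Rightarrow> (real^'n \<Rightarrow> real^'p \<Rightarrow> real^'c) \<Rightarrow> real \<Rightarrow> real^'c
    \<Rightarrow> ((real^'n) \<times> (real^'c)) \<Rightarrow> real^'c \<Rightarrow> real^'p \<Rightarrow> ((real^'n) \<times> (real^'c))" where
  "Hmap J G rho mut w d s =
     (grad J (fst w) + grad (\<lambda>z. inner (snd w) (G z s)) (fst w),
      G (fst w) s + d + (1 / rho) *\<^sub>R (mut - snd w))"

text \<open>lambda_F = P * max_i ||T_i||_2, where T_i consists of the rows r of Tm with cblk r = Suc i
  (the operator norm is computed with the other rows zeroed out, which does not change it).\<close>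
definition lambdaF :: "nat \<Rightarrow> ('c \<Rightarrow> nat) \<Rightarrow> real^'p^'c \<Rightarrow> real" where
  "lambdaF P cblk Tm =
     real P * Max ((\<lambda>i. onorm (\<lambda>s. \<chi> r. if cblk r = Suc i then (Tm *v s) $ r else 0)) ` {..<P})"

text \<open>Vectors of block i are represented inside the full vector (other blocks fixed), so
  ||u - z_i|| and grad f(z_i)^T (u - z_i) are the full-space quantities.\<close>
definition block_update :: "('n \<Rightarrow> nat) \<Rightarrow> real^'n \<Rightarrow> real^'n \<Rightarrow> (nat \<Rightarrow> real) \<Rightarrow> (nat \<Rightarrow> real)
    \<Rightarrow> real \<Rightarrow> (real^'n \<Rightarrow> real) \<Rightarrow> nat \<Rightarrow> real^'n \<Rightarrow> real^'n" where
  "block_update blk lo up alpha c0 beta f i z =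
     (let g = grad f z;
          gi = (\<chi> j. if blk j = i then g $ j else 0);
          Zi = {y \<in> boxset lo up. \<forall>j. blk j \<noteq> i \<longrightarrow> y $ j = z $ j};
          u = (\<lambda>c. closest_point Zi (z - (1 / c) *\<^sub>R gi));
          ok = (\<lambda>c. f (u c) + alpha i / 2 * (norm (u c - z))\<^sup>2
                    \<le> f z + inner gi (u c - z) + c / 2 * (norm (u c - z))\<^sup>2);
          t = (LEAST t::nat. ok (c0 i * beta ^ t))
      in u (c0 i * beta ^ t))"

definition sweep :: "nat \<Rightarrow> ('n \<Rightarrow> nat) \<Rightarrow> real^'n \<Rightarrow> real^'n \<Rightarrow> (nat \<Rightarrow> real) \<Rightarrow> (nat \<Rightarrow> real)
    \<Rightarrow> real \<Rightarrow> (real^'n \<Rightarrow> real) \<Rightarrow> real^'n \<Rightarrow> real^'n" where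
  "sweep P blk lo up alpha c0 beta f z =
     foldl (\<lambda>z i. block_update blk lo up alpha c0 beta f i z) z [0..<P]"

end

theory Submission
  imports Defs
begin

(* Write s0 = s_k, s1 = s_{k+1}, w0 = w*_k, w1 = w*_{k+1}.
   (1) The parameter enters G only through the affine term T s, so F(w,.) is
       lambda_F-Lipschitz; with the strong regularity (A) of the KKT map this gives
       the drift bound ||w1 - w0|| <= lambda_A lambda_F ||s1 - s0||.
   (2) Every KKT point w of (P_s) also solves the perturbed system
       0 in H^{mu0}_rho(w,d,s) + N(w) for the shift d = (mu_w - mu0)/rho.  Since the
       drift is small, the shift d' belonging to w1 lies in B(0,q_B), so by the
       uniqueness part of (B) w1 = w_B(d',s1); likewise w_inf = w_B(d_k,s1) by (C).
   (3) The solution map of (B) is lambda_B lambda_H-Lipschitz in d, and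
       ||d_k - d'|| = ||mubar_k - mu1|| / rho <= (||wbar_k - w0|| + ||w0 - w1||)/rho,
       which combined with (1) is the claimed estimate. *)

(* The gradient ignores additive constants; hence the s-dependent term T s of G
   does not enter the gradient part of F. *)
lemma grad_add_const: "grad (\<lambda>z. f z + (c::real)) = grad f"
proof -
  have "(GDERIV (\<lambda>z. f z + c) x :> g) \<longleftrightarrow> (GDERIV f x :> g)" for x g
    unfolding gderiv_def
    using has_derivative_add_const[of "\<lambda>z. f z + c" _ _ "-c"] has_derivative_add_const[of f _ _ c]
    by auto
  then show ?thesis unfolding grad_def by (intro ext arg_cong[where f=The] ext) simp
qed

lemma Fmap_param_diff:
  assumes G_def: "G = (\<lambda>z s. Qg z + Tm *v s)"
  shows "Fmap J G w s' - Fmap J G w s = (0, Tm *v (s' - s))"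
proof -
  have "grad (\<lambda>z. inner (snd w) (G z s)) = grad (\<lambda>z. inner (snd w) (Qg z))" for s
    unfolding G_def inner_add_right by (rule grad_add_const)
  then show ?thesis
    unfolding Fmap_def by (simp add: G_def matrix_vector_mult_diff_distrib)
qed

(* lambda_F bounds the operator norm of T: T is the sum of its row blocks T_1..T_P
   (rows with block index 0 vanish), each of norm at most max_i ||T_i||. *)
lemma norm_Tm_le_lambdaF:
  fixes Tm :: "real^('p::finite)^('c::finite)"
  assumes cblk_range: "\<forall>r. cblk r \<le> P"
    and rows0: "\<forall>r. cblk r = 0 \<longrightarrow> (\<forall>l. Tm $ r $ l = 0)"
  shows "norm (Tm *v v) \<le> lambdaF P cblk Tm * norm v"
proof -
  define T where "T i = (\<lambda>s. \<chi> r. if cblk r = Suc i then (Tm *v s) $ r else 0)" for i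
  define m where "m = Max ((\<lambda>i. onorm (T i)) ` {..<P})"
  have T_linear: "bounded_linear (T i)" for i
  proof -
    have "T i = (\<lambda>s. (\<chi> r l. if cblk r = Suc i then Tm $ r $ l else 0) *v s)"
      unfolding T_def by (auto simp: vec_eq_iff matrix_vector_mult_def)
    then show ?thesis by simp
  qed
  have T_sum: "Tm *v v = (\<Sum>i<P. T i v)"
  proof (subst vec_eq_iff, rule allI)
    fix r
    have "(\<Sum>i<P. T i v) $ r = (\<Sum>i<P. if cblk r = Suc i then (Tm *v v) $ r else 0)"
      unfolding T_def by (simp add: sum_component)
    also have "\<dots> = (Tm *v v) $ r"
    proof (cases "cblk r")
      case 0
      then show ?thesis using rows0 by (simp add: matrix_vector_mult_def)
    next
      case (Suc i)
      then have "i < P" using cblk_range[rule_format, of r] by simp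
      then show ?thesis using Suc by (simp add: sum.delta' cong: if_cong)
    qed
    finally show "(Tm *v v) $ r = (\<Sum>i<P. T i v) $ r" by simp
  qed
  have "norm (Tm *v v) \<le> (\<Sum>i<P. norm (T i v))"
    unfolding T_sum by (rule norm_sum)
  also have "\<dots> \<le> (\<Sum>i<P. m * norm v)"
  proof (rule sum_mono)
    fix i assume "i \<in> {..<P}"
    then have "onorm (T i) \<le> m" unfolding m_def by (intro Max_ge) auto
    then show "norm (T i v) \<le> m * norm v"
      using onorm[OF T_linear] by (meson mult_right_mono norm_ge_zero order_trans)
  qed
  also have "\<dots> = lambdaF P cblk Tm * norm v"
    by (simp add: lambdaF_def m_def T_def)
  finally show ?thesis .
qed

lemma Fmap_param_lipschitz:
  assumes "G = (\<lambda>z s. Qg z + Tm *v s)"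
    and "\<forall>r. cblk r \<le> P" and "\<forall>r. cblk r = 0 \<longrightarrow> (\<forall>l. Tm $ r $ l = 0)"
  shows "norm (Fmap J G w s' - Fmap J G w s) \<le> lambdaF P cblk Tm * norm (s' - s)"
  using norm_Tm_le_lambdaF[OF assms(2,3)] by (simp add: Fmap_param_diff[OF assms(1)] norm_Pair)

(* Drift of a strongly regular solution map: the reference solution w0 is the value
   of the localized solution map at s0, and its value at a nearby parameter s1 moves
   by at most lam times the change of F. *)
lemma solution_map_drift:
  fixes F :: "'w::real_inner \<Rightarrow> 's::real_normed_vector \<Rightarrow> 'w" and ws :: "'s \<Rightarrow> 'w"
  assumes sol: "\<forall>ss \<in> ball s0 r \<inter> S. ws ss \<in> ball w0 \<delta> \<and> gen_eq C (F (ws ss) ss) (ws ss)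
                 \<and> (\<forall>w \<in> ball w0 \<delta>. gen_eq C (F w ss) w \<longrightarrow> w = ws ss)"
    and lip: "\<forall>ss \<in> ball s0 r \<inter> S. \<forall>ss' \<in> ball s0 r \<inter> S.
                norm (ws ss - ws ss') \<le> lam * norm (F (ws ss') ss - F (ws ss') ss')"
    and F_lip: "norm (F w0 s1 - F w0 s0) \<le> LF * norm (s1 - s0)"
    and kkt0: "gen_eq C (F w0 s0) w0"
    and pos: "r > 0" "\<delta> > 0" "lam \<ge> 0"
    and params: "s0 \<in> S" "s1 \<in> S" "norm (s1 - s0) < r"
  shows "norm (ws s1 - w0) \<le> lam * LF * norm (s1 - s0)"
proof -
  have s0_in: "s0 \<in> ball s0 r \<inter> S" and s1_in: "s1 \<in> ball s0 r \<inter> S"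
    using pos params by (auto simp: dist_norm norm_minus_commute)
  have "ws s0 = w0"
    using sol s0_in kkt0 pos(2) by (metis centre_in_ball)
  then have "norm (ws s1 - w0) \<le> lam * norm (F w0 s1 - F w0 s0)"
    using lip s0_in s1_in by metis
  also have "\<dots> \<le> lam * (LF * norm (s1 - s0))"
    using F_lip pos(3) by (rule mult_left_mono)
  finally show ?thesis by simp
qed

lemma solution_map_lipschitz:
  fixes H :: "'w::real_normed_vector \<Rightarrow> 'd::real_normed_vector \<Rightarrow> 's::real_normed_vector \<Rightarrow> 'v::real_normed_vector"
  assumes lip: "norm (wB dd ss - wB dd' ss) \<le> lamB * norm (H (wB dd' ss) dd ss - H (wB dd' ss) dd' ss)"
    and H_lip: "\<forall>w. norm (H w dd ss - H w dd' ss) \<le> lamH * norm ((dd, ss) - (dd', ss))"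
    and "lamB \<ge> 0"
  shows "norm (wB dd ss - wB dd' ss) \<le> lamB * lamH * norm (dd - dd')"
proof -
  have "lamB * norm (H (wB dd' ss) dd ss - H (wB dd' ss) dd' ss) \<le> lamB * (lamH * norm (dd - dd'))"
    using H_lip \<open>lamB \<ge> 0\<close> by (intro mult_left_mono) (auto simp: norm_Pair)
  then show ?thesis using lip by simp
qed

(* At the shift d = (mu_w - mu)/rho the perturbed map coincides with F:
   H^{mu}_rho(w,d,s) = F(w,s).  Hence KKT points of (P_s) solve the perturbed
   problem of (B). *)
lemma Hmap_shift_eq_Fmap:
  assumes "rho \<noteq> 0"
  shows "Hmap J G rho mut w ((1 / rho) *\<^sub>R (snd w - mut)) s = Fmap J G w s"
  unfolding Hmap_def Fmap_def by (simp add: algebra_simps)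

lemma kkt_point_eq_shift_solution:
  assumes near: "w \<in> ball w0 \<delta>" and kkt: "gen_eq C (Fmap J G w ss) w"
    and uniq: "\<forall>w \<in> ball w0 \<delta>. gen_eq C (Hmap J G rho (snd w0) w dd ss) w \<longrightarrow> w = wB"
    and shift: "dd = (1 / rho) *\<^sub>R (snd w - snd w0)" and "rho \<noteq> 0"
  shows "w = wB"
  using uniq near kkt by (simp add: shift Hmap_shift_eq_Fmap[OF \<open>rho \<noteq> 0\<close>])

lemma norm_snd_diff_le: "norm (snd a - snd b) \<le> norm (a - b)"
  by (metis norm_snd_le prod.collapse snd_diff)

lemma shift_error_bound:
  fixes wb w0 w1 winf :: "'a::real_normed_vector \<times> 'b::real_normed_vector"
  assumes lip: "norm (winf - w1) \<le> L * norm (dd - dd')"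
    and shift: "dd - dd' = (1 / rho) *\<^sub>R (snd wb - snd w1)"
    and drift: "norm (w1 - w0) \<le> D" and "rho > 0" "L \<ge> 0"
  shows "norm (winf - w1) \<le> L / rho * (norm (wb - w0) + D)"
proof -
  have "norm (dd - dd') \<le> norm (wb - w1) / rho"
    using norm_snd_diff_le[of wb w1] \<open>rho > 0\<close> by (simp add: shift divide_right_mono)
  also have "norm (wb - w1) \<le> norm (wb - w0) + D"
    using norm_triangle_ineq4[of "wb - w0" "w1 - w0"] drift by simp
  finally have "norm (dd - dd') \<le> (norm (wb - w0) + D) / rho"
    using \<open>rho > 0\<close> by (simp add: divide_right_mono)
  then have "L * norm (dd - dd') \<le> L * ((norm (wb - w0) + D) / rho)"
    using \<open>L \<ge> 0\<close> by (rule mult_left_mono)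
  with lip show ?thesis by simp
qed

theorem mainTheorem8:
  fixes P :: nat and blk :: "'n::finite \<Rightarrow> nat" and lo up :: "real^'n"
    and Jb :: "nat \<Rightarrow> real^'n \<Rightarrow> real" and J :: "real^'n \<Rightarrow> real"
    and Qg :: "real^'n \<Rightarrow> real^'c" and cblk :: "'c::finite \<Rightarrow> nat" and Tm :: "real^('p::finite)^'c"
    and G :: "real^'n \<Rightarrow> real^'p \<Rightarrow> real^'c"
    and S :: "(real^'p) set" and rho :: real and M :: nat
    and alpha c0 :: "nat \<Rightarrow> real" and beta :: real
    and s :: "nat \<Rightarrow> real^'p" and wstar :: "nat \<Rightarrow> (real^'n) \<times> (real^'c)"
    and zbar :: "nat \<Rightarrow> real^'n" and mubar :: "nat \<Rightarrow> real^'c"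
    and zinf :: "nat \<Rightarrow> real^'n" and winf :: "nat \<Rightarrow> (real^'n) \<times> (real^'c)"
    and d :: "nat \<Rightarrow> real^'c"
    and lamH :: real
    and rA deltaA lamA :: real and wA :: "nat \<Rightarrow> real^'p \<Rightarrow> (real^'n) \<times> (real^'c)"
    and rB qB lamB deltaB :: real and wB :: "nat \<Rightarrow> real^'c \<Rightarrow> real^'p \<Rightarrow> (real^'n) \<times> (real^'c)"
    and Cc delta psi :: real
    and k :: nat
  assumes P_pos: "P \<ge> 1"
    and blk_range: "\<forall>j. blk j < P"
    and box_nonempty: "\<forall>j. lo $ j \<le> up $ j"
    and Jb_poly: "\<forall>i<P. polyfun_on {j. blk j = i} (Jb i)"
    and J_def: "J = (\<lambda>z. \<Sum>i<P. Jb i z)"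
    and cblk_range: "\<forall>r. cblk r \<le> P"
    and Qc_rows: "\<forall>r. cblk r = 0 \<longrightarrow> polyfun_on UNIV (\<lambda>z. Qg z $ r) \<and> (\<forall>l. Tm $ r $ l = 0)"
    and g_rows: "\<forall>r i. cblk r = Suc i \<longrightarrow> polyfun_on {j. blk j = i} (\<lambda>z. Qg z $ r)"
    and G_def: "G = (\<lambda>z s. Qg z + Tm *v s)"
    and rho_pos: "rho > 0" and M_ge: "M \<ge> 1"
    and alpha_pos: "\<forall>i. alpha i > 0" and c0_pos: "\<forall>i. c0 i > 0" and beta_gt: "beta > 1"
    and s_in_S: "\<forall>k. s k \<in> S"
    and wstar_kkt: "\<forall>k. gen_eq (boxset lo up \<times> UNIV) (Fmap J G (wstar k) (s k)) (wstar k)"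
    and zbar0: "zbar 0 \<in> boxset lo up"
    and zbar_step: "\<forall>k. zbar (Suc k) =
        (sweep P blk lo up alpha c0 beta (\<lambda>z. augL J G rho z (mubar k) (s (Suc k))) ^^ M) (zbar k)"
    and mubar_step: "\<forall>k. mubar (Suc k) = mubar k + rho *\<^sub>R G (zbar (Suc k)) (s (Suc k))"
    and zinf_def: "\<forall>k. zinf k =
        lim (\<lambda>n. (sweep P blk lo up alpha c0 beta (\<lambda>z. augL J G rho z (mubar k) (s (Suc k))) ^^ n) (zbar k))"
    and winf_def: "\<forall>k. winf k = (zinf k, mubar k + rho *\<^sub>R G (zinf k) (s (Suc k)))"
    and d_def: "\<forall>k. d k = (1 / rho) *\<^sub>R (mubar k - snd (wstar k))"
    and lamH_pos: "lamH > 0"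
    and H_lip: "\<forall>mut w dd ss dd' ss'. norm (Hmap J G rho mut w dd ss - Hmap J G rho mut w dd' ss')
                  \<le> lamH * norm ((dd, ss) - (dd', ss'))"
    and A_pos: "rA > 0" "deltaA > 0" "lamA > 0"
    and A_sol: "\<forall>k. \<forall>ss \<in> ball (s k) rA \<inter> S.
        wA k ss \<in> ball (wstar k) deltaA \<and> gen_eq (boxset lo up \<times> UNIV) (Fmap J G (wA k ss) ss) (wA k ss)
        \<and> (\<forall>w \<in> ball (wstar k) deltaA. gen_eq (boxset lo up \<times> UNIV) (Fmap J G w ss) w \<longrightarrow> w = wA k ss)"
    and A_lip: "\<forall>k. \<forall>ss \<in> ball (s k) rA \<inter> S. \<forall>ss' \<in> ball (s k) rA \<inter> S.
        norm (wA k ss - wA k ss') \<le> lamA * norm (Fmap J G (wA k ss') ss - Fmap J G (wA k ss') ss')"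
    and A_next: "\<forall>k. norm (s (Suc k) - s k) < rA \<longrightarrow> wstar (Suc k) = wA k (s (Suc k))"
    and B_pos: "rB > 0" "qB > 0" "lamB > 0" "deltaB \<ge> deltaA"
    and B_sol: "\<forall>k. \<forall>dd \<in> ball 0 qB. \<forall>ss \<in> ball (s k) rB \<inter> S.
        wB k dd ss \<in> ball (wstar k) deltaB
        \<and> gen_eq (boxset lo up \<times> UNIV) (Hmap J G rho (snd (wstar k)) (wB k dd ss) dd ss) (wB k dd ss)
        \<and> (\<forall>w \<in> ball (wstar k) deltaB.
             gen_eq (boxset lo up \<times> UNIV) (Hmap J G rho (snd (wstar k)) w dd ss) w \<longrightarrow> w = wB k dd ss)"
    and B_lip: "\<forall>k. \<forall>dd \<in> ball 0 qB. \<forall>dd' \<in> ball 0 qB. \<forall>ss \<in> ball (s k) rB \<inter> S. \<forall>ss' \<in> ball (s k) rB \<inter> S.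
        norm (wB k dd ss - wB k dd' ss')
          \<le> lamB * norm (Hmap J G rho (snd (wstar k)) (wB k dd' ss') dd ss
                         - Hmap J G rho (snd (wstar k)) (wB k dd' ss') dd' ss')"
    and C_pos: "Cc > 0" "delta > 0" "psi > 0"
    and C_conv: "\<forall>k. convergent
        (\<lambda>n. (sweep P blk lo up alpha c0 beta (\<lambda>z. augL J G rho z (mubar k) (s (Suc k))) ^^ n) (zbar k))"
    and C_lim: "\<forall>k. d k \<in> ball 0 qB \<and> norm (s (Suc k) - s k) < rB \<longrightarrow> winf k = wB k (d k) (s (Suc k))"
    and C_rate: "\<forall>k. norm (zbar k - zinf k) < delta \<longrightarrow>
        norm (zbar (Suc k) - zinf k) \<le> Cc * real M powr (- psi) * norm (zbar k - zinf k)"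
    and step_small: "norm (s (Suc k) - s k) < rA" "norm (s (Suc k) - s k) < rB"
      "lamA * lambdaF P cblk Tm * norm (s (Suc k) - s k) < qB * rho"
    and wbar_close: "norm ((zbar k, mubar k) - wstar k) < qB * rho"
  shows "norm (winf k - wstar (Suc k))
     \<le> lamB * lamH / rho * (norm ((zbar k, mubar k) - wstar k)
                              + lamA * lambdaF P cblk Tm * norm (s (Suc k) - s k))"
proof -
  define s0 s1 w0 w1 wb where "s0 = s k" and "s1 = s (Suc k)" and "w0 = wstar k"
    and "w1 = wstar (Suc k)" and "wb = (zbar k, mubar k)"
  define drift where "drift = lamA * lambdaF P cblk Tm * norm (s1 - s0)"
  note defs = s0_def s1_def w0_def w1_def wb_def
  have s1_A: "s1 \<in> ball s0 rA \<inter> S" and s1_B: "s1 \<in> ball s0 rB \<inter> S"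
    using s_in_S step_small(1,2) by (auto simp: defs dist_norm norm_minus_commute)
  have w1_A: "w1 = wA k s1" using A_next step_small(1) by (simp add: defs)
  have drift: "norm (w1 - w0) \<le> drift"
    unfolding w1_A drift_def w0_def s0_def s1_def
    using solution_map_drift[OF A_sol[THEN spec[of _ k]] A_lip[THEN spec[of _ k]]
        Fmap_param_lipschitz[OF G_def cblk_range] wstar_kkt[THEN spec[of _ k]]]
      Qc_rows A_pos s_in_S step_small(1) by auto
  \<comment> \<open>Step (2): both w1 and w_inf are values of the solution map of (B).\<close>
  define d' where "d' = (1 / rho) *\<^sub>R (snd w1 - snd w0)"
  have d'_in: "d' \<in> ball 0 qB"
    using norm_snd_diff_le[of w1 w0] drift step_small(3) rho_pos
    by (simp add: d'_def drift_def defs divide_less_eq)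
  have dk_in: "d k \<in> ball 0 qB"
    using norm_snd_diff_le[of wb w0] wbar_close rho_pos d_def
    by (simp add: defs divide_less_eq)
  have "w1 \<in> ball w0 deltaA" using A_sol s1_A by (simp add: w1_A defs)
  then have "w1 \<in> ball w0 deltaB" using B_pos(4) by simp
  then have w1_B: "w1 = wB k d' s1"
  proof (rule kkt_point_eq_shift_solution[OF _ _ _ d'_def])
    show "\<forall>w \<in> ball w0 deltaB. gen_eq (boxset lo up \<times> UNIV) (Hmap J G rho (snd w0) w d' s1) w
            \<longrightarrow> w = wB k d' s1"
      using B_sol d'_in s1_B by (simp add: defs)
  qed (use wstar_kkt rho_pos in \<open>simp_all add: defs\<close>)
  have winf_B: "winf k = wB k (d k) s1" using C_lim dk_in step_small(2) by (simp add: defs)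
  have "norm (winf k - w1) \<le> lamB * lamH * norm (d k - d')"
    unfolding winf_B w1_B
  proof (rule solution_map_lipschitz[where H = "Hmap J G rho (snd w0)"])
    show "norm (wB k (d k) s1 - wB k d' s1) \<le> lamB * norm
        (Hmap J G rho (snd w0) (wB k d' s1) (d k) s1 - Hmap J G rho (snd w0) (wB k d' s1) d' s1)"
      using B_lip dk_in d'_in s1_B by (simp add: defs)
  qed (use H_lip B_pos(3) in \<open>blast, simp\<close>)
  moreover have "d k - d' = (1 / rho) *\<^sub>R (snd wb - snd w1)"
    using d_def by (simp add: d'_def defs algebra_simps)
  ultimately show ?thesis
    using shift_error_bound[OF _ _ drift rho_pos] lamH_pos B_pos(3) by (simp add: drift_def defs)
qed

end
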